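(* Let $N\to\infty$ and let $h=h(N)$ satisfy $h\to\infty$ and $h=o(N)$ as $N\to\infty$. Let $f_1,f_2:\mathbb{N}\to\mathbb{R}$ satisfy, for every $\varepsilon>0$, $f_1(n),f_2(n)\ll_{\varepsilon}N^{\varepsilon}$ uniformly for $n\ll N$. Then for every $\varepsilon>0$, $$I_{f_1,f_2}(N,h)=\sum_{a}W(a)\,\mathcal{C}_{f_1,f_2}(a)+O_{\varepsilon}(N^{\varepsilon}h^3),$$ where the sum is over integers $a\in[-2h,2h]$.
   Context: For $r\ne0$, $\mathrm{sgn}(r)=|r|/r$, and $\mathrm{sgn}(0)=0$. The mixed symmetry integral is $$I_{f_1,f_2}(N,h)=\int_h^N\Big(\sum_{|n-x|\le h}f_1(n)\,\mathrm{sgn}(n-x)\Big)\Big(\sum_{|m-x|\le h}f_2(m)\,\mathrm{sgn}(m-x)\Big)\,dx.$$ For integers $a\in[-2h,2h]$, the mixed correlation is $\mathcal{C}_{f_1,f_2}(a)=\sum_{|a|<n\le N-|a|}f_1(n)f_2(n-a)$, and the weight is $W(a)=\max(2h-3|a|,\,|a|-2h)$; $W$ is supported in $[-2h,2h]$. *)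

theory Defs
  imports "HOL-Analysis.Analysis" "HOL-Library.Landau_Symbols"
begin

text \<open>Inner symmetric sum: sum over natural numbers n with |n - x| <= h of f(n) sgn(n - x).
  Isabelle's sgn on reals agrees with the paper's sgn (sgn 0 = 0).\<close>
definition sym_sum :: "(nat \<Rightarrow> real) \<Rightarrow> real \<Rightarrow> real \<Rightarrow> real" where
  "sym_sum f h x = (\<Sum>n\<in>{n::nat. \<bar>real n - x\<bar> \<le> h}. f n * sgn (real n - x))"

definition mixed_sym_integral :: "(nat \<Rightarrow> real) \<Rightarrow> (nat \<Rightarrow> real) \<Rightarrow> nat \<Rightarrow> real \<Rightarrow> real" where
  "mixed_sym_integral f1 f2 N h =
     integral {h..real N} (\<lambda>x. sym_sum f1 h x * sym_sum f2 h x)"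

definition mixed_corr :: "(nat \<Rightarrow> real) \<Rightarrow> (nat \<Rightarrow> real) \<Rightarrow> nat \<Rightarrow> int \<Rightarrow> real" where
  "mixed_corr f1 f2 N a =
     (\<Sum>n\<in>{\<bar>a\<bar> + 1 .. int N - \<bar>a\<bar>}. f1 (nat n) * f2 (nat (n - a)))"

definition weightW :: "real \<Rightarrow> int \<Rightarrow> real" where
  "weightW h a = max (2 * h - 3 * \<bar>real_of_int a\<bar>) (\<bar>real_of_int a\<bar> - 2 * h)"

end

theory Submission
  imports Defs
begin

text \<open>With \<open>w\<close> the window \<open>sgn\<close> supported on \<open>[-h, h]\<close>, the integrand is
  \<open>\<Sum>n m. f1(n) f2(m) w(n - x) w(m - x)\<close>, so the integral is \<open>\<Sum>n m. f1(n) f2(m) J(n, m)\<close>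
  with \<open>J(n, m) = \<integral>\<^sub>h\<^sup>N w(n - x) w(m - x) dx\<close>. The kernel \<open>J\<close> vanishes for \<open>|n - m| > 2h\<close>,
  and when both windows lie inside \<open>[h, N]\<close> it depends only on \<open>a = n - m\<close> and equals \<open>W(a)\<close>.
  The weighted correlation sum is the same double sum with kernel \<open>W(n - m)\<close>, so the two
  differ only on the \<open>O(h\<^sup>2)\<close> pairs with \<open>n\<close> within \<open>O(h)\<close> of \<open>0\<close> or \<open>N\<close>, each
  contributing \<open>O(h N\<^sup>\<epsilon>)\<close>.\<close>

definition sign_window :: "real \<Rightarrow> real \<Rightarrow> real \<Rightarrow> real" where
  "sign_window h y x = indicator {y - h..y} x - indicator {y..y + h} x"

lemma sign_window_eq:
  "0 \<le> h \<Longrightarrow> sign_window h y x = (if \<bar>y - x\<bar> \<le> h then sgn (y - x) else 0)"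
  by (auto simp: sign_window_def indicator_def sgn_if)

definition overlap_length :: "real \<Rightarrow> real \<Rightarrow> real \<Rightarrow> real \<Rightarrow> real \<Rightarrow> real \<Rightarrow> real" where
  "overlap_length a b c d l u = max 0 (min (min b d) u - max (max a c) l)"

lemma has_integral_indicator_mult_indicator:
  "((\<lambda>x. indicator {a..b} x * indicator {c..d} x) has_integral overlap_length a b c d l u) {l..u}"
proof -
  have prod: "(\<lambda>x. indicator {a..b} x * indicator {c..d} x)
      = (\<lambda>x::real. if x \<in> {max a c..min b d} then 1 else 0 :: real)"
    by (auto simp: indicator_def)
  have meet: "{max a c..min b d} \<inter> {l..u} = {max (max a c) l..min (min b d) u}"
    by auto
  have "((\<lambda>x. 1::real) has_integral overlap_length a b c d l u) {max (max a c) l..min (min b d) u}"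
    using has_integral_const_real[of "1::real" "max (max a c) l" "min (min b d) u"]
    by (auto simp: overlap_length_def max_def)
  then show ?thesis
    unfolding prod has_integral_restrict_Int meet .
qed

lemma overlap_length_eq_0: "b \<le> c \<or> d \<le> a \<or> u \<le> a \<Longrightarrow> overlap_length a b c d l u = 0"
  unfolding overlap_length_def by auto

lemma overlap_length_bounds: "a \<le> b \<Longrightarrow> 0 \<le> overlap_length a b c d l u \<and> overlap_length a b c d l u \<le> b - a"
  unfolding overlap_length_def by linarith

text \<open>Each window is the difference of the indicators of its two halves, so the integral of a
  product of two windows over \<open>[h, N]\<close> is this signed sum of overlap lengths.\<close>
definition sym_kernel :: "real \<Rightarrow> real \<Rightarrow> real \<Rightarrow> real \<Rightarrow> real" where
  "sym_kernel h N x y =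
     overlap_length (x - h) x (y - h) y h N - overlap_length (x - h) x y (y + h) h N
   - overlap_length x (x + h) (y - h) y h N + overlap_length x (x + h) y (y + h) h N"

lemma has_integral_sign_window_mult:
  "((\<lambda>t. sign_window h x t * sign_window h y t) has_integral sym_kernel h N x y) {h..N}"
proof -
  have "(\<lambda>t. sign_window h x t * sign_window h y t) = (\<lambda>t.
      indicator {x-h..x} t * indicator {y-h..y} t - indicator {x-h..x} t * indicator {y..y+h} t
    - indicator {x..x+h} t * indicator {y-h..y} t + indicator {x..x+h} t * indicator {y..y+h} t)"
    by (auto simp: sign_window_def algebra_simps)
  then show ?thesis
    unfolding sym_kernel_def
    by (simp only:) (intro has_integral_add has_integral_diff has_integral_indicator_mult_indicator)
qed

lemma sym_kernel_eq_0:
  assumes "0 \<le> h" and "\<bar>x - y\<bar> > 2 * h \<or> x > N + h"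
  shows "sym_kernel h N x y = 0"
proof -
  have "overlap_length a b c d h N = 0" if "b \<le> c \<or> d \<le> a \<or> N \<le> a" for a b c d
    using that by (rule overlap_length_eq_0)
  with assms show ?thesis
    unfolding sym_kernel_def by (smt (verit))
qed

lemma abs_sym_kernel_le: "0 \<le> h \<Longrightarrow> \<bar>sym_kernel h N x y\<bar> \<le> 4 * h"
  using overlap_length_bounds[of "x - h" x "y - h" y h N] overlap_length_bounds[of "x - h" x y "y + h" h N]
    overlap_length_bounds[of x "x + h" "y - h" y h N] overlap_length_bounds[of x "x + h" y "y + h" h N]
  unfolding sym_kernel_def by auto

lemma sym_kernel_interior:
  assumes "0 \<le> h" "2 * h \<le> x" "2 * h \<le> y" "x \<le> N - h" "y \<le> N - h" "\<bar>x - y\<bar> \<le> 2 * h"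
  shows "sym_kernel h N x y = max (2 * h - 3 * \<bar>x - y\<bar>) (\<bar>x - y\<bar> - 2 * h)"
  using assms unfolding sym_kernel_def overlap_length_def
  by (auto simp: max_def min_def abs_if)


lemma sym_sum_eq_sum_sign_window:
  assumes "0 \<le> h" "h \<le> real N" "x \<le> real N"
  shows "sym_sum f h x = (\<Sum>n\<le>2*N. f n * sign_window h (real n) x)"
proof -
  have "{n. \<bar>real n - x\<bar> \<le> h} \<subseteq> {..2*N}"
    using assms by auto
  then show ?thesis
    unfolding sym_sum_def
    by (intro sum.mono_neutral_cong_left) (auto simp: sign_window_eq[OF assms(1)] abs_minus_commute)
qed

lemma mixed_sym_integral_eq_kernel_sum:
  assumes "0 \<le> h" "h \<le> real N"
  shows "mixed_sym_integral f1 f2 N h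
    = (\<Sum>(n, m)\<in>{..2*N} \<times> {..2*N}. f1 n * f2 m * sym_kernel h N (real n) (real m))"
proof -
  have "mixed_sym_integral f1 f2 N h = integral {h..real N} (\<lambda>t.
      \<Sum>(n, m)\<in>{..2*N} \<times> {..2*N}. f1 n * f2 m * (sign_window h (real n) t * sign_window h (real m) t))"
    unfolding mixed_sym_integral_def
  proof (rule integral_cong)
    fix t assume "t \<in> {h..real N}"
    then have "t \<le> real N" by simp
    then show "sym_sum f1 h t * sym_sum f2 h t = (\<Sum>(n, m)\<in>{..2*N} \<times> {..2*N}.
        f1 n * f2 m * (sign_window h (real n) t * sign_window h (real m) t))"
      by (simp add: sym_sum_eq_sum_sign_window[OF assms] sum_product sum.cartesian_product mult_ac)
  qed
  also have "\<dots> = (\<Sum>(n, m)\<in>{..2*N} \<times> {..2*N}. f1 n * f2 m * sym_kernel h N (real n) (real m))"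
    by (intro integral_unique has_integral_sum finite_SigmaI finite_atMost)
       (auto intro: has_integral_mult_right has_integral_sign_window_mult)
  finally show ?thesis .
qed

text \<open>The weighted sum of correlations rewritten over pairs \<open>(n, m)\<close> with \<open>a = n - m\<close>.\<close>
definition corr_kernel :: "real \<Rightarrow> nat \<Rightarrow> nat \<Rightarrow> nat \<Rightarrow> real" where
  "corr_kernel h N n m =
     (if \<bar>real n - real m\<bar> \<le> 2 * h \<and> \<bar>int n - int m\<bar> < int n \<and> int n + \<bar>int n - int m\<bar> \<le> int N
      then weightW h (int n - int m) else 0)"

lemma weighted_corr_sum_eq_kernel_sum:
  "(\<Sum>a\<in>{\<lceil>-2 * h\<rceil>..\<lfloor>2 * h\<rfloor>}. weightW h a * mixed_corr f1 f2 N a)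
    = (\<Sum>(n, m)\<in>{..2*N} \<times> {..2*N}. f1 n * f2 m * corr_kernel h N n m)"
proof -
  define A where "A = {\<lceil>-2 * h\<rceil>..\<lfloor>2 * h\<rfloor>}"
  define K where "K a = {\<bar>a\<bar> + 1..int N - \<bar>a\<bar>}" for a :: int
  define P where "P = {(n, m) \<in> {..2*N} \<times> {..2*N}.
    \<bar>real n - real m\<bar> \<le> 2 * h \<and> \<bar>int n - int m\<bar> < int n \<and> int n + \<bar>int n - int m\<bar> \<le> int N}"
  have "bij_betw (\<lambda>(n, m). (int n - int m, int n)) P (Sigma A K)"
    by (rule bij_betw_byWitness[where f' = "\<lambda>(a, k). (nat k, nat (k - a))"])
       (auto simp: P_def A_def K_def ceiling_le_iff le_floor_iff)
  then have "(\<Sum>(n, m)\<in>P. weightW h (int n - int m) * (f1 n * f2 m))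
      = (\<Sum>(a, k)\<in>Sigma A K. weightW h a * (f1 (nat k) * f2 (nat (k - a))))"
    by (subst sum.reindex_bij_betw[symmetric]) (auto simp: split_def)
  also have "\<dots> = (\<Sum>a\<in>A. weightW h a * mixed_corr f1 f2 N a)"
    unfolding mixed_corr_def sum_distrib_left K_def A_def
    by (subst sum.Sigma) (auto simp: split_def)
  also have "(\<Sum>(n, m)\<in>P. weightW h (int n - int m) * (f1 n * f2 m))
      = (\<Sum>(n, m)\<in>{..2*N} \<times> {..2*N}. f1 n * f2 m * corr_kernel h N n m)"
    by (rule sum.mono_neutral_cong_left) (auto simp: P_def corr_kernel_def split: if_splits)
  finally show ?thesis
    unfolding A_def by simp
qed

lemma abs_weightW_le: "\<bar>real_of_int a\<bar> \<le> 2 * h \<Longrightarrow> \<bar>weightW h a\<bar> \<le> 4 * h"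
  unfolding weightW_def by (auto simp: max_def)

lemma abs_corr_kernel_le: "0 \<le> h \<Longrightarrow> \<bar>corr_kernel h N n m\<bar> \<le> 4 * h"
  unfolding corr_kernel_def by (auto intro: abs_weightW_le)

lemma sym_kernel_eq_corr_kernel:
  assumes "0 < h"
    and "(4 * h \<le> real n \<and> real n \<le> real N - 3 * h) \<or> \<bar>real n - real m\<bar> > 2 * h \<or> real n > real N + h"
  shows "sym_kernel h (real N) (real n) (real m) = corr_kernel h N n m"
proof -
  have dist: "real_of_int \<bar>int n - int m\<bar> = \<bar>real n - real m\<bar>"
    by simp
  show ?thesis
  proof (cases "\<bar>real n - real m\<bar> > 2 * h \<or> real n > real N + h")
    case True
    then have "corr_kernel h N n m = 0"
      using \<open>0 < h\<close> dist unfolding corr_kernel_def by auto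
    with True show ?thesis
      using \<open>0 < h\<close> by (simp add: sym_kernel_eq_0)
  next
    case False
    with assms have n: "4 * h \<le> real n" "real n \<le> real N - 3 * h" and d: "\<bar>real n - real m\<bar> \<le> 2 * h"
      by auto
    have "sym_kernel h (real N) (real n) (real m) = max (2 * h - 3 * \<bar>real n - real m\<bar>) (\<bar>real n - real m\<bar> - 2 * h)"
      using \<open>0 < h\<close> n d by (intro sym_kernel_interior) auto
    moreover have "\<bar>int n - int m\<bar> < int n" "int n + \<bar>int n - int m\<bar> \<le> int N"
      using \<open>0 < h\<close> n d dist by linarith+
    ultimately show ?thesis
      using d by (simp add: corr_kernel_def weightW_def)
  qed
qed

lemma finite_nat_real_le: "finite {n::nat. real n \<le> b}"
  by (rule finite_subset[of _ "{..nat \<lceil>b\<rceil>}"]) (auto, linarith)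

lemma card_nat_real_interval_le:
  assumes "a \<le> b + 1"
  shows "real (card {n::nat. a \<le> real n \<and> real n \<le> b}) \<le> b - a + 1"
proof -
  have "card {n::nat. a \<le> real n \<and> real n \<le> b} = card (int ` {n::nat. a \<le> real n \<and> real n \<le> b})"
    by (simp add: card_image)
  also have "\<dots> \<le> card {\<lceil>a\<rceil>..\<lfloor>b\<rfloor>}"
    by (rule card_mono) (auto simp: ceiling_le_iff le_floor_iff)
  finally have "real (card {n::nat. a \<le> real n \<and> real n \<le> b}) \<le> real (nat (\<lfloor>b\<rfloor> + 1 - \<lceil>a\<rceil>))"
    by simp
  moreover have "real_of_int \<lfloor>b\<rfloor> \<le> b" "a \<le> real_of_int \<lceil>a\<rceil>"
    by simp_all
  ultimately show ?thesis
    using assms by linarith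
qed

lemma finite_nat_near: "finite {m::nat. \<bar>x - real m\<bar> \<le> r}"
  by (rule finite_subset[OF _ finite_nat_real_le[of "x + r"]]) auto

lemma card_SIGMA_near_le:
  assumes "finite B" "0 \<le> r"
  shows "real (card (SIGMA n:B. {m::nat. \<bar>real n - real m\<bar> \<le> r})) \<le> real (card B) * (2 * r + 1)"
proof -
  have near: "{m::nat. \<bar>real n - real m\<bar> \<le> r} = {m. real n - r \<le> real m \<and> real m \<le> real n + r}" for n
    by auto
  have "real (card (SIGMA n:B. {m::nat. \<bar>real n - real m\<bar> \<le> r}))
      = (\<Sum>n\<in>B. real (card {m::nat. \<bar>real n - real m\<bar> \<le> r}))"
    using assms by (simp add: finite_nat_near)
  also have "\<dots> \<le> real (card B) * (2 * r + 1)"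
  proof (rule sum_bounded_above)
    fix n
    show "real (card {m::nat. \<bar>real n - real m\<bar> \<le> r}) \<le> 2 * r + 1"
      using card_nat_real_interval_le[of "real n - r" "real n + r"] assms unfolding near by simp
  qed
  finally show ?thesis .
qed

definition boundary_points :: "real \<Rightarrow> nat \<Rightarrow> nat set" where
  "boundary_points h N = {n. real n \<le> 4 * h} \<union> {n. real N - 3 * h \<le> real n \<and> real n \<le> real N + h}"

definition boundary_pairs :: "real \<Rightarrow> nat \<Rightarrow> (nat \<times> nat) set" where
  "boundary_pairs h N = (SIGMA n:boundary_points h N. {m. \<bar>real n - real m\<bar> \<le> 2 * h})"

lemma abs_sym_kernel_diff_corr_kernel_le:
  assumes "0 < h"
  shows "\<bar>sym_kernel h (real N) (real n) (real m) - corr_kernel h N n m\<bar>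
    \<le> (if (n, m) \<in> boundary_pairs h N then 8 * h else 0)"
proof (cases "(n, m) \<in> boundary_pairs h N")
  case True
  then show ?thesis
    using abs_sym_kernel_le[of h N "real n" "real m"] abs_corr_kernel_le[of h N n m] assms by simp
next
  case False
  then have "sym_kernel h (real N) (real n) (real m) = corr_kernel h N n m"
    using assms by (intro sym_kernel_eq_corr_kernel) (auto simp: boundary_pairs_def boundary_points_def)
  with False show ?thesis
    by simp
qed

lemma finite_boundary_points: "finite (boundary_points h N)"
  unfolding boundary_points_def
  by (intro finite_UnI finite_nat_real_le finite_subset[OF _ finite_nat_real_le[of "real N + h"]]) auto

lemma card_boundary_points_le:
  assumes "0 \<le> h"
  shows "real (card (boundary_points h N)) \<le> 8 * h + 2"
proof -
  have "card (boundary_points h N) \<le> card {n::nat. 0 \<le> real n \<and> real n \<le> 4 * h}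
      + card {n::nat. real N - 3 * h \<le> real n \<and> real n \<le> real N + h}"
    unfolding boundary_points_def using card_Un_le by simp
  then show ?thesis
    using card_nat_real_interval_le[of 0 "4 * h"] card_nat_real_interval_le[of "real N - 3 * h" "real N + h"] assms
    by simp
qed

lemma finite_boundary_pairs: "finite (boundary_pairs h N)"
  unfolding boundary_pairs_def by (simp add: finite_boundary_points finite_nat_near)

lemma card_boundary_pairs_le:
  assumes "0 \<le> h"
  shows "real (card (boundary_pairs h N)) \<le> (8 * h + 2) * (4 * h + 1)"
proof -
  have "real (card (boundary_pairs h N)) \<le> real (card (boundary_points h N)) * (4 * h + 1)"
    using card_SIGMA_near_le[OF finite_boundary_points, of "2 * h"] assms unfolding boundary_pairs_def by simp
  also have "\<dots> \<le> (8 * h + 2) * (4 * h + 1)"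
    using card_boundary_points_le assms by (intro mult_right_mono) auto
  finally show ?thesis .
qed

lemma abs_mixed_sym_integral_diff_le:
  fixes f1 f2 :: "nat \<Rightarrow> real" and h :: real
  assumes h: "1 \<le> h" "h \<le> real N"
    and f1: "\<And>n. n \<le> 2*N \<Longrightarrow> \<bar>f1 n\<bar> \<le> B1" and f2: "\<And>n. n \<le> 2*N \<Longrightarrow> \<bar>f2 n\<bar> \<le> B2"
  shows "\<bar>mixed_sym_integral f1 f2 N h - (\<Sum>a\<in>{\<lceil>-2 * h\<rceil>..\<lfloor>2 * h\<rfloor>}. weightW h a * mixed_corr f1 f2 N a)\<bar>
    \<le> 400 * (B1 * B2) * h ^ 3"
proof -
  define S where "S = {..2*N} \<times> {..2*N}"
  define T where "T = boundary_pairs h N"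
  define c where "c = 8 * h * (B1 * B2)"
  have h_nonneg: "0 \<le> h"
    using h by simp
  have "0 \<le> B1" "0 \<le> B2"
    using f1[of 0] f2[of 0] by auto
  then have "0 \<le> c"
    using h unfolding c_def by simp
  have "\<bar>mixed_sym_integral f1 f2 N h - (\<Sum>a\<in>{\<lceil>-2 * h\<rceil>..\<lfloor>2 * h\<rfloor>}. weightW h a * mixed_corr f1 f2 N a)\<bar>
      = \<bar>\<Sum>(n, m)\<in>S. f1 n * f2 m * (sym_kernel h N (real n) (real m) - corr_kernel h N n m)\<bar>"
    using h unfolding mixed_sym_integral_eq_kernel_sum[OF h_nonneg h(2)] weighted_corr_sum_eq_kernel_sum S_def
    by (simp add: sum_subtractf[symmetric] split_def algebra_simps)
  also have "\<dots> \<le> (\<Sum>p\<in>S. if p \<in> T then c else 0)"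
  proof (rule order_trans[OF sum_abs sum_mono], clarify)
    fix n m assume "(n, m) \<in> S"
    then have f: "\<bar>f1 n\<bar> * \<bar>f2 m\<bar> \<le> B1 * B2"
      using f1 f2 \<open>0 \<le> B1\<close> by (intro mult_mono) (auto simp: S_def)
    have kernel: "\<bar>sym_kernel h N (real n) (real m) - corr_kernel h N n m\<bar> \<le> (if (n, m) \<in> T then 8 * h else 0)"
      using abs_sym_kernel_diff_corr_kernel_le[of h N n m] h unfolding T_def by simp
    show "\<bar>f1 n * f2 m * (sym_kernel h N (real n) (real m) - corr_kernel h N n m)\<bar>
        \<le> (if (n, m) \<in> T then c else 0)"
    proof (cases "(n, m) \<in> T")
      case True
      with kernel have "\<bar>sym_kernel h N (real n) (real m) - corr_kernel h N n m\<bar> \<le> 8 * h"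
        by simp
      then have "\<bar>f1 n\<bar> * \<bar>f2 m\<bar> * \<bar>sym_kernel h N (real n) (real m) - corr_kernel h N n m\<bar>
          \<le> (B1 * B2) * (8 * h)"
        using mult_mono[OF f] \<open>0 \<le> B1\<close> \<open>0 \<le> B2\<close> by simp
      with True show ?thesis
        by (simp add: abs_mult c_def mult_ac)
    next
      case False
      with kernel show ?thesis
        by simp
    qed
  qed
  also have "\<dots> = c * real (card (S \<inter> T))"
    by (simp add: S_def sum.inter_restrict[symmetric])
  also have "\<dots> \<le> c * ((8 * h + 2) * (4 * h + 1))"
  proof -
    have "card (S \<inter> T) \<le> card T"
      unfolding T_def by (simp add: card_mono finite_boundary_pairs)
    then show ?thesis
      using card_boundary_pairs_le[of h N] h \<open>0 \<le> c\<close> unfolding T_def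
      by (intro mult_left_mono) linarith+
  qed
  also have "\<dots> \<le> c * (50 * h ^ 2)"
  proof (rule mult_left_mono[OF _ \<open>0 \<le> c\<close>])
    have "h \<le> h * h"
      using h by (simp add: mult_le_cancel_left1)
    then have "16 * h + 2 \<le> 18 * (h * h)"
      using h by linarith
    then show "(8 * h + 2) * (4 * h + 1) \<le> 50 * h ^ 2"
      by (simp add: power2_eq_square algebra_simps)
  qed
  also have "\<dots> = 400 * (B1 * B2) * h ^ 3"
    by (simp add: c_def power2_eq_square power3_eq_cube)
  finally show ?thesis .
qed

theorem lemma1:
  fixes h :: "nat \<Rightarrow> real" and f1 f2 :: "nat \<Rightarrow> real"
  assumes h_inf: "filterlim h at_top sequentially"
    and h_small: "h \<in> o(\<lambda>N. real N)"
    and f1_bd: "\<And>\<epsilon> C. \<epsilon> > 0 \<Longrightarrow> C > 0 \<Longrightarrow>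
        \<exists>K. \<forall>N::nat. N \<ge> 1 \<longrightarrow> (\<forall>n::nat. real n \<le> C * real N \<longrightarrow> \<bar>f1 n\<bar> \<le> K * real N powr \<epsilon>)"
    and f2_bd: "\<And>\<epsilon> C. \<epsilon> > 0 \<Longrightarrow> C > 0 \<Longrightarrow>
        \<exists>K. \<forall>N::nat. N \<ge> 1 \<longrightarrow> (\<forall>n::nat. real n \<le> C * real N \<longrightarrow> \<bar>f2 n\<bar> \<le> K * real N powr \<epsilon>)"
  shows "\<forall>\<epsilon>>0. (\<lambda>N. mixed_sym_integral f1 f2 N (h N)
            - (\<Sum>a\<in>{\<lceil>-2 * h N\<rceil>..\<lfloor>2 * h N\<rfloor>}. weightW (h N) a * mixed_corr f1 f2 N a))
         \<in> O(\<lambda>N. real N powr \<epsilon> * h N ^ 3)"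
proof (intro allI impI)
  fix \<epsilon> :: real
  assume "\<epsilon> > 0"
  then obtain K1 K2 where
    K1: "\<And>N n. N \<ge> 1 \<Longrightarrow> real n \<le> 2 * real N \<Longrightarrow> \<bar>f1 n\<bar> \<le> K1 * real N powr (\<epsilon> / 2)" and
    K2: "\<And>N n. N \<ge> 1 \<Longrightarrow> real n \<le> 2 * real N \<Longrightarrow> \<bar>f2 n\<bar> \<le> K2 * real N powr (\<epsilon> / 2)"
    using f1_bd[of "\<epsilon> / 2" 2] f2_bd[of "\<epsilon> / 2" 2] by (metis half_gt_zero zero_less_numeral)
  have "eventually (\<lambda>N. 1 \<le> h N) sequentially"
    using h_inf by (simp add: filterlim_at_top)
  moreover have "eventually (\<lambda>N. \<bar>h N\<bar> \<le> real N) sequentially"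
    using landau_o.smallD[OF h_small, of 1] by simp
  moreover have "eventually (\<lambda>N::nat. 1 \<le> N) sequentially"
    by (rule eventually_ge_at_top)
  ultimately have "eventually (\<lambda>N. \<bar>mixed_sym_integral f1 f2 N (h N)
      - (\<Sum>a\<in>{\<lceil>-2 * h N\<rceil>..\<lfloor>2 * h N\<rfloor>}. weightW (h N) a * mixed_corr f1 f2 N a)\<bar>
      \<le> 400 * (K1 * K2) * \<bar>real N powr \<epsilon> * h N ^ 3\<bar>) sequentially"
  proof eventually_elim
    case (elim N)
    have "\<bar>mixed_sym_integral f1 f2 N (h N)
        - (\<Sum>a\<in>{\<lceil>-2 * h N\<rceil>..\<lfloor>2 * h N\<rfloor>}. weightW (h N) a * mixed_corr f1 f2 N a)\<bar>
        \<le> 400 * ((K1 * real N powr (\<epsilon> / 2)) * (K2 * real N powr (\<epsilon> / 2))) * h N ^ 3"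
      using elim by (intro abs_mixed_sym_integral_diff_le K1 K2) auto
    also have "\<dots> = 400 * (K1 * K2) * \<bar>real N powr \<epsilon> * h N ^ 3\<bar>"
      using elim(1) by (simp add: powr_add[symmetric] mult_ac)
    finally show ?case .
  qed
  then show "(\<lambda>N. mixed_sym_integral f1 f2 N (h N)
      - (\<Sum>a\<in>{\<lceil>-2 * h N\<rceil>..\<lfloor>2 * h N\<rfloor>}. weightW (h N) a * mixed_corr f1 f2 N a))
      \<in> O(\<lambda>N. real N powr \<epsilon> * h N ^ 3)"
    by (intro bigoI[where c = "400 * (K1 * K2)"]) simp
qed

end
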